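(* Let $\mathsf{F}:\mathcal{B}(\mathbb{R}_+)\to\mathcal{L}(\mathcal{H})$ be a smeared number observable and $\mathsf{E}:\mathcal{B}([0,2\pi))\to\mathcal{L}(\mathcal{H})$ a covariant phase observable. Then $\mathsf{F}$ and $\mathsf{E}$ have a joint observable $\mathsf{M}:\mathcal{B}(\mathbb{C})\to\mathcal{L}(\mathcal{H})$ (i.e.\ $\mathsf{M}(X\times[0,2\pi))=\mathsf{F}(X)$ and $\mathsf{M}(\mathbb{R}_+\times\Theta)=\mathsf{E}(\Theta)$) if and only if they have a joint observable which is a phase shift covariant phase space observable.
   Context: $\mathcal{H}\simeq L^2(\mathbb{R})$ with number basis $\{|n\rangle\}$ and number operator $N$. $\mathbb{C}\simeq\mathbb{R}_+\times[0,2\pi)$ via polar coordinates, $X\times\Theta=\{re^{i\theta}:r\in X,\theta\in\Theta\}$; $\dot{+}$ is addition modulo $2\pi$. A covariant phase observable is a POVM $\mathsf{E}$ on $\mathcal{B}([0,2\pi))$ with $e^{i\theta N}\mathsf{E}(\Theta)e^{-i\theta N}=\mathsf{E}(\Theta\dot{+}\theta)$ for all $\Theta,\theta$. A smeared number observable is a POVM of the form $\mathsf{F}(X)=\sum_{n=0}^\infty m(X,n)|n\rangle\langle n|$ where $m:\mathcal{B}(\mathbb{R}_+)\times\mathbb{N}\to[0,1]$ is a Markov kernel (a probability measure in $X$ for each $n$). A phase shift covariant phase space observable is a POVM $\mathsf{P}$ on $\mathcal{B}(\mathbb{C})$ with $e^{i\theta N}\mathsf{P}(X\times\Theta)e^{-i\theta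 N}=\mathsf{P}(X\times(\Theta\dot{+}\theta))$ for all $X\in\mathcal{B}(\mathbb{R}_+)$, $\Theta\in\mathcal{B}([0,2\pi))$, $\theta\in[0,2\pi)$. *)

theory Defs
  imports "HOL-Probability.Probability"
begin

text \<open>Operators on H = L^2(R), identified with l^2(N) via the number basis |n>,
  are represented by their matrix elements A m n = <m|A|n>.\<close>

type_synonym opmat = "nat \<Rightarrow> nat \<Rightarrow> complex"

definition id_op :: opmat where
  "id_op = (\<lambda>m n. if m = n then 1 else 0)"

definition psd :: "opmat \<Rightarrow> bool" where
  "psd A \<longleftrightarrow> (\<forall>(\<psi>::nat \<Rightarrow> complex) (K::nat).
     Im (\<Sum>m<K. \<Sum>n<K. cnj (\<psi> m) * A m n * \<psi> n) = 0 \<and>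
     0 \<le> Re (\<Sum>m<K. \<Sum>n<K. cnj (\<psi> m) * A m n * \<psi> n))"

definition povm :: "'a measure \<Rightarrow> ('a set \<Rightarrow> opmat) \<Rightarrow> bool" where
  "povm M E \<longleftrightarrow>
     (\<forall>X\<in>sets M. psd (E X)) \<and>
     E (space M) = id_op \<and>
     (\<forall>(A::nat \<Rightarrow> 'a set) m n. range A \<subseteq> sets M \<longrightarrow> disjoint_family A \<longrightarrow>
        (\<lambda>i. E (A i) m n) sums E (\<Union>i. A i) m n)"

text \<open>Value spaces: R_+ = [0,\<infinity>), the phase interval [0,2\<pi>), and the phase space
  C identified with R_+ \<times> [0,2\<pi>) via polar coordinates.\<close>
definition Rplus :: "real measure" where
  "Rplus = restrict_space borel {0..}"

definition Phase :: "real measure" where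
  "Phase = restrict_space borel {0..<2*pi}"

definition PhSp :: "(real \<times> real) measure" where
  "PhSp = Rplus \<Otimes>\<^sub>M Phase"

definition addmod :: "real \<Rightarrow> real \<Rightarrow> real" where
  "addmod t \<theta> = t + \<theta> - 2*pi * of_int \<lfloor>(t + \<theta>) / (2*pi)\<rfloor>"

definition shift_set :: "real set \<Rightarrow> real \<Rightarrow> real set" where
  "shift_set \<Theta> \<theta> = (\<lambda>t. addmod t \<theta>) ` \<Theta>"

text \<open>Matrix of e^{i\<theta>N} A e^{-i\<theta>N}.\<close>
definition phase_conj :: "real \<Rightarrow> opmat \<Rightarrow> opmat" where
  "phase_conj \<theta> A = (\<lambda>m n. cis (\<theta> * (real m - real n)) * A m n)"

definition covariant_phase :: "(real set \<Rightarrow> opmat) \<Rightarrow> bool" where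
  "covariant_phase E \<longleftrightarrow> povm Phase E \<and>
     (\<forall>\<Theta>\<in>sets Phase. \<forall>\<theta>\<in>{0..<2*pi}. phase_conj \<theta> (E \<Theta>) = E (shift_set \<Theta> \<theta>))"

definition smeared_number :: "(real set \<Rightarrow> opmat) \<Rightarrow> bool" where
  "smeared_number F \<longleftrightarrow> (\<exists>\<mu> :: nat \<Rightarrow> real measure.
     (\<forall>n. prob_space (\<mu> n) \<and> sets (\<mu> n) = sets Rplus) \<and>
     (\<forall>X\<in>sets Rplus. F X = (\<lambda>a b. if a = b then complex_of_real (measure (\<mu> a) X) else 0)))"

definition phase_shift_covariant_ps :: "((real \<times> real) set \<Rightarrow> opmat) \<Rightarrow> bool" where
  "phase_shift_covariant_ps P \<longleftrightarrow> povm PhSp P \<and>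
     (\<forall>X\<in>sets Rplus. \<forall>\<Theta>\<in>sets Phase. \<forall>\<theta>\<in>{0..<2*pi}.
        phase_conj \<theta> (P (X \<times> \<Theta>)) = P (X \<times> shift_set \<Theta> \<theta>))"

definition joint_observable ::
  "((real \<times> real) set \<Rightarrow> opmat) \<Rightarrow> (real set \<Rightarrow> opmat) \<Rightarrow> (real set \<Rightarrow> opmat) \<Rightarrow> bool" where
  "joint_observable M F E \<longleftrightarrow> povm PhSp M \<and>
     (\<forall>X\<in>sets Rplus. M (X \<times> {0..<2*pi}) = F X) \<and>
     (\<forall>\<Theta>\<in>sets Phase. M ({0..} \<times> \<Theta>) = E \<Theta>)"

end

theory Submission
  imports Defs
begin

text \<open>Given any joint observable \<open>M\<close>, average
  it over the phase shift group, \<open>P(Z) = (1/2\<pi>) \<integral> exp(-i\<theta>N) M(R\<theta> Z) exp(i\<theta>N) d\<theta>\<close>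
  over \<open>[0,2\<pi>)\<close>, where \<open>R\<theta>\<close> rotates phase space by \<open>\<theta>\<close>. Positivity survives averaging, and
  weak \<open>\<sigma>\<close>-additivity survives by dominated convergence, since polarization bounds the matrix
  entries of \<open>M(Z)\<close> uniformly in \<open>Z\<close>. Covariance of \<open>P\<close> is the translation invariance of
  the average over the circle. The marginals are unchanged: the number marginal because
  \<open>X \<times> [0,2\<pi>)\<close> is rotation invariant and \<open>F(X)\<close> is diagonal, the phase marginal because the
  covariance of \<open>E\<close> exactly cancels the conjugation. Measurability of \<open>\<theta> \<mapsto> M(R\<theta> Z)\<close> comes
  from the scalar measures \<open>Z \<mapsto> \<langle>\<psi>|M(Z)|\<psi>\<rangle>\<close> on the product with the circle, again via
  polarization.\<close>

section \<open>Rotations of phase space\<close>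

definition mod_2pi :: "real \<Rightarrow> real" where
  "mod_2pi x = x - 2*pi * of_int \<lfloor>x / (2*pi)\<rfloor>"

lemma addmod_eq_mod_2pi: "addmod t \<theta> = mod_2pi (t + \<theta>)"
  by (simp add: addmod_def mod_2pi_def)

lemma mod_2pi_ge_0: "0 \<le> mod_2pi x"
proof -
  have "2*pi * of_int \<lfloor>x / (2*pi)\<rfloor> \<le> 2*pi * (x / (2*pi))"
    by (intro mult_left_mono of_int_floor_le) auto
  then show ?thesis by (simp add: mod_2pi_def)
qed

lemma mod_2pi_less: "mod_2pi x < 2*pi"
proof -
  have "x / (2*pi) < of_int \<lfloor>x / (2*pi)\<rfloor> + 1" by (rule real_of_int_floor_add_one_gt)
  then have "x < 2*pi * (of_int \<lfloor>x / (2*pi)\<rfloor> + 1)" by (simp add: field_simps)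
  then show ?thesis by (simp add: mod_2pi_def algebra_simps)
qed

lemma mod_2pi_add_multiple: "mod_2pi (x + 2*pi * of_int k) = mod_2pi x"
proof -
  have "(x + 2*pi * of_int k) / (2*pi) = x / (2*pi) + of_int k" by (simp add: field_simps)
  then have "\<lfloor>(x + 2*pi * of_int k) / (2*pi)\<rfloor> = \<lfloor>x / (2*pi)\<rfloor> + k" by simp
  then show ?thesis by (simp add: mod_2pi_def algebra_simps)
qed

lemma mod_2pi_eq_self: "0 \<le> x \<Longrightarrow> x < 2*pi \<Longrightarrow> mod_2pi x = x"
  by (simp add: mod_2pi_def floor_eq_iff field_simps)

lemma mod_2pi_add_left: "mod_2pi (mod_2pi x + y) = mod_2pi (x + y)"
proof -
  have "mod_2pi x + y = (x + y) + 2*pi * of_int (- \<lfloor>x / (2*pi)\<rfloor>)" by (simp add: mod_2pi_def)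
  then show ?thesis by (simp only: mod_2pi_add_multiple)
qed

lemma mod_2pi_add_2pi: "mod_2pi (x + 2*pi) = mod_2pi x"
  using mod_2pi_add_multiple[of x 1] by simp

lemma borel_measurable_mod_2pi[measurable]: "mod_2pi \<in> borel_measurable borel"
  unfolding mod_2pi_def by measurable

lemma space_Rplus: "space Rplus = {0..}"
  by (simp add: Rplus_def)

lemma space_Phase: "space Phase = {0..<2*pi}"
  by (simp add: Phase_def)

lemma space_PhSp: "space PhSp = {0..} \<times> {0..<2*pi}"
  by (simp add: PhSp_def space_pair_measure space_Rplus space_Phase)

definition rotate :: "real \<Rightarrow> real \<times> real \<Rightarrow> real \<times> real" where
  "rotate \<theta> z = (fst z, mod_2pi (snd z + \<theta>))"

definition rotate_set :: "real \<Rightarrow> (real \<times> real) set \<Rightarrow> (real \<times> real) set" where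
  "rotate_set \<theta> Z = rotate \<theta> ` Z"

lemma rotate_set_rotate_set: "rotate_set \<theta> (rotate_set \<phi> Z) = rotate_set (\<phi> + \<theta>) Z"
  unfolding rotate_set_def image_image rotate_def by (simp add: mod_2pi_add_left add.assoc)

lemma rotate_set_add_2pi: "rotate_set (\<theta> + 2*pi) Z = rotate_set \<theta> Z"
  unfolding rotate_set_def rotate_def by (metis add.assoc mod_2pi_add_2pi)

lemma rotate_inverse:
  assumes "z \<in> space PhSp" shows "rotate \<theta> (rotate (-\<theta>) z) = z"
  using assms mod_2pi_add_left[of "snd z - \<theta>" \<theta>]
  by (auto simp: rotate_def space_PhSp mod_2pi_eq_self)

lemma rotate_set_eq_vimage:
  assumes "Z \<subseteq> space PhSp"
  shows "rotate_set \<theta> Z = {z \<in> space PhSp. rotate (-\<theta>) z \<in> Z}"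
proof (intro set_eqI iffI)
  fix z assume "z \<in> rotate_set \<theta> Z"
  then obtain w where "w \<in> Z" and z: "z = rotate \<theta> w" by (auto simp: rotate_set_def)
  then have w: "w \<in> space PhSp" using assms by auto
  then have "z \<in> space PhSp" by (auto simp: z space_PhSp rotate_def mod_2pi_ge_0 mod_2pi_less)
  moreover have "rotate (-\<theta>) z = w" using rotate_inverse[OF w, of "-\<theta>"] by (simp add: z)
  ultimately show "z \<in> {z \<in> space PhSp. rotate (-\<theta>) z \<in> Z}" using \<open>w \<in> Z\<close> by simp
next
  fix z assume "z \<in> {z \<in> space PhSp. rotate (-\<theta>) z \<in> Z}"
  then show "z \<in> rotate_set \<theta> Z"
    unfolding rotate_set_def using rotate_inverse by (metis (mono_tags) image_eqI mem_Collect_eq)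
qed

lemma rotate_set_Times: "rotate_set \<theta> (X \<times> \<Theta>) = X \<times> shift_set \<Theta> \<theta>"
  unfolding rotate_set_def shift_set_def rotate_def addmod_eq_mod_2pi by (auto simp: image_def)

lemma shift_set_full: "shift_set {0..<2*pi} \<theta> = {0..<2*pi}"
proof (intro set_eqI iffI)
  fix t assume "t \<in> shift_set {0..<2*pi} \<theta>"
  then show "t \<in> {0..<2*pi}"
    by (auto simp: shift_set_def addmod_eq_mod_2pi mod_2pi_ge_0 mod_2pi_less)
next
  fix t :: real assume "t \<in> {0..<2*pi}"
  then have "t = mod_2pi (mod_2pi (t - \<theta>) + \<theta>)"
    by (simp add: mod_2pi_add_left mod_2pi_eq_self)
  moreover have "mod_2pi (t - \<theta>) \<in> {0..<2*pi}" by (simp add: mod_2pi_ge_0 mod_2pi_less)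
  ultimately show "t \<in> shift_set {0..<2*pi} \<theta>"
    unfolding shift_set_def addmod_eq_mod_2pi by blast
qed

lemma rotate_set_space: "rotate_set \<theta> (space PhSp) = space PhSp"
  unfolding space_PhSp rotate_set_Times shift_set_full ..

lemma measurable_rotate_inverse:
  "(\<lambda>x. rotate (- fst x) (snd x)) \<in> lborel \<Otimes>\<^sub>M PhSp \<rightarrow>\<^sub>M PhSp"
proof -
  have radial: "(\<lambda>x::real \<times> real \<times> real. fst (snd x)) \<in> lborel \<Otimes>\<^sub>M PhSp \<rightarrow>\<^sub>M Rplus"
    unfolding PhSp_def by measurable
  have "(\<lambda>x::real \<times> real \<times> real. snd (snd x)) \<in> lborel \<Otimes>\<^sub>M PhSp \<rightarrow>\<^sub>M Phase"
    unfolding PhSp_def by measurable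
  moreover have "(\<lambda>t. t) \<in> Phase \<rightarrow>\<^sub>M borel"
    unfolding Phase_def by (rule measurable_restrict_space1) simp
  ultimately have "(\<lambda>x::real \<times> real \<times> real. snd (snd x)) \<in> borel_measurable (lborel \<Otimes>\<^sub>M PhSp)"
    by (rule measurable_compose)
  then have "(\<lambda>x::real \<times> real \<times> real. mod_2pi (snd (snd x) + - fst x)) \<in> borel_measurable (lborel \<Otimes>\<^sub>M PhSp)"
    by measurable
  then have angular: "(\<lambda>x::real \<times> real \<times> real. mod_2pi (snd (snd x) + - fst x)) \<in> lborel \<Otimes>\<^sub>M PhSp \<rightarrow>\<^sub>M Phase"
    unfolding Phase_def by (intro measurable_restrict_space2) (auto simp: mod_2pi_ge_0 mod_2pi_less)
  show ?thesis
    using measurable_Pair[OF radial angular] by (simp add: rotate_def PhSp_def)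
qed

lemma sets_rotate_set: assumes Z: "Z \<in> sets PhSp" shows "rotate_set \<theta> Z \<in> sets PhSp"
proof -
  have "(\<lambda>z. (\<theta>, z)) \<in> PhSp \<rightarrow>\<^sub>M lborel \<Otimes>\<^sub>M PhSp" by measurable
  from measurable_compose[OF this measurable_rotate_inverse]
  have "rotate (-\<theta>) \<in> PhSp \<rightarrow>\<^sub>M PhSp" by simp
  moreover have "rotate_set \<theta> Z = rotate (-\<theta>) -` Z \<inter> space PhSp"
    using rotate_set_eq_vimage[OF sets.sets_into_space[OF Z]] by auto
  ultimately show ?thesis using measurable_sets Z by metis
qed

lemma sets_shift_set: assumes \<Theta>: "\<Theta> \<in> sets Phase" shows "shift_set \<Theta> \<theta> \<in> sets Phase"
proof -
  have sub: "\<Theta> \<subseteq> {0..<2*pi}" using sets.sets_into_space[OF \<Theta>] by (simp add: space_Phase)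
  have "shift_set \<Theta> \<theta> = (\<lambda>t. mod_2pi (t - \<theta>)) -` \<Theta> \<inter> space Phase"
  proof (intro set_eqI iffI)
    fix t assume "t \<in> shift_set \<Theta> \<theta>"
    then obtain s where "s \<in> \<Theta>" and t: "t = mod_2pi (s + \<theta>)"
      by (auto simp: shift_set_def addmod_eq_mod_2pi)
    then have "mod_2pi (t - \<theta>) = s"
      using sub mod_2pi_add_left[of "s + \<theta>" "-\<theta>"] by (auto simp: mod_2pi_eq_self)
    with \<open>s \<in> \<Theta>\<close> t show "t \<in> (\<lambda>t. mod_2pi (t - \<theta>)) -` \<Theta> \<inter> space Phase"
      by (simp add: space_Phase mod_2pi_ge_0 mod_2pi_less)
  next
    fix t assume t: "t \<in> (\<lambda>t. mod_2pi (t - \<theta>)) -` \<Theta> \<inter> space Phase"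
    then have "t = mod_2pi (mod_2pi (t - \<theta>) + \<theta>)"
      by (simp add: mod_2pi_add_left mod_2pi_eq_self space_Phase)
    with t show "t \<in> shift_set \<Theta> \<theta>" unfolding shift_set_def addmod_eq_mod_2pi by blast
  qed
  moreover have "(\<lambda>t. mod_2pi (t - \<theta>)) \<in> Phase \<rightarrow>\<^sub>M Phase"
  proof -
    have "(\<lambda>t. mod_2pi (t - \<theta>)) \<in> borel_measurable Phase"
      unfolding Phase_def by (rule measurable_restrict_space1) measurable
    then show ?thesis
      unfolding Phase_def
      by (intro measurable_restrict_space2) (auto simp: Phase_def mod_2pi_ge_0 mod_2pi_less)
  qed
  ultimately show ?thesis using measurable_sets \<Theta> by metis
qed

section \<open>Positive operators and POVMs\<close>

definition quad_form :: "opmat \<Rightarrow> (nat \<Rightarrow> complex) \<Rightarrow> nat \<Rightarrow> complex" where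
  "quad_form A \<psi> K = (\<Sum>m<K. \<Sum>n<K. cnj (\<psi> m) * A m n * \<psi> n)"

lemma psd_iff_quad_form:
  "psd A \<longleftrightarrow> (\<forall>\<psi> K. Im (quad_form A \<psi> K) = 0 \<and> 0 \<le> Re (quad_form A \<psi> K))"
  by (simp add: psd_def quad_form_def)

lemma psd_quad_form:
  "psd A \<Longrightarrow> quad_form A \<psi> K = of_real (Re (quad_form A \<psi> K)) \<and> 0 \<le> Re (quad_form A \<psi> K)"
  by (simp add: psd_iff_quad_form complex_eq_iff)

definition polarization_vector :: "nat \<Rightarrow> nat \<Rightarrow> complex \<Rightarrow> nat \<Rightarrow> complex" where
  "polarization_vector m n c j = (if j = m then 1 else 0) + (if j = n then c else 0)"

lemma quad_form_polarization_vector: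
  assumes "m < K" "n < K"
  shows "quad_form A (polarization_vector m n c) K =
           A m m + c * A m n + cnj c * A n m + cnj c * c * A n n"
proof -
  have delta: "(\<Sum>a<K. \<Sum>b<K. if a = p \<and> b = q then x else 0) = x"
    if "p < K" "q < K" for p q and x :: complex
  proof -
    have "(\<Sum>b<K. if a = p \<and> b = q then x else 0) = (if a = p then x else 0)" for a
      using that by (auto simp: if_distrib cong: if_cong)
    then show ?thesis using that by simp
  qed
  have expand: "cnj (polarization_vector m n c a) * A a b * polarization_vector m n c b =
     ((if a = m \<and> b = m then A m m else 0) + (if a = m \<and> b = n then c * A m n else 0)) +
     ((if a = n \<and> b = m then cnj c * A n m else 0) + (if a = n \<and> b = n then cnj c * c * A n n else 0))"
    for a b
    by (auto simp: polarization_vector_def algebra_simps)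
  show ?thesis
    unfolding quad_form_def expand sum.distrib using delta assms by simp
qed

lemma polarization_identity:
  "A m n = (1/4) * (\<Sum>k<4. cnj (\<i>^k) * quad_form A (polarization_vector m n (\<i>^k)) (Suc (max m n)))"
  by (simp add: quad_form_polarization_vector numeral_eq_Suc lessThan_Suc algebra_simps)

lemma psd_entry_bound:
  assumes "psd A"
  shows "norm (A m n) \<le> (1/4) * (\<Sum>k<4. Re (quad_form A (polarization_vector m n (\<i>^k)) (Suc (max m n))))"
proof -
  let ?q = "\<lambda>k. quad_form A (polarization_vector m n (\<i>^k)) (Suc (max m n))"
  have norm_q: "norm (cnj (\<i>^k) * ?q k) = Re (?q k)" for k
  proof -
    have "?q k = of_real (Re (?q k))" "0 \<le> Re (?q k)" using psd_quad_form[OF assms] by auto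
    then have "norm (?q k) = Re (?q k)" by (metis norm_of_real abs_of_nonneg)
    then show ?thesis by (simp add: norm_mult norm_power)
  qed
  have "norm (A m n) = (1/4) * norm (\<Sum>k<4. cnj (\<i>^k) * ?q k)"
    by (subst polarization_identity) (simp add: norm_mult)
  also have "\<dots> \<le> (1/4) * (\<Sum>k<4. norm (cnj (\<i>^k) * ?q k))"
    by (intro mult_left_mono norm_sum) auto
  also have "\<dots> = (1/4) * (\<Sum>k<4. Re (?q k))" by (simp only: norm_q)
  finally show ?thesis .
qed

lemma povm_psd: "povm N M \<Longrightarrow> Z \<in> sets N \<Longrightarrow> psd (M Z)"
  by (simp add: povm_def)

lemma povm_sums: "povm N M \<Longrightarrow> range A \<subseteq> sets N \<Longrightarrow> disjoint_family A \<Longrightarrow>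
    (\<lambda>i. M (A i) m n) sums M (\<Union>i. A i) m n"
  by (simp add: povm_def)

lemma povm_empty: assumes "povm N M" shows "M {} m n = 0"
proof -
  have "(\<lambda>i::nat. M {} m n) sums M {} m n"
    using povm_sums[OF assms, of "\<lambda>_. {}"] by (simp add: disjoint_family_on_def)
  then have "(\<lambda>i::nat. M {} m n) \<longlonglongrightarrow> 0" using summable_LIMSEQ_zero sums_summable by blast
  then show ?thesis using LIMSEQ_const_iff by blast
qed

lemma povm_finite_additive:
  fixes A :: "nat \<Rightarrow> _"
  assumes M: "povm N M" and A: "\<And>i. A i \<in> sets N" and "disjoint_family A"
  shows "M (\<Union>i<k. A i) m n = (\<Sum>i<k. M (A i) m n)"
proof -
  let ?B = "\<lambda>i. if i < k then A i else {}"
  have "range ?B \<subseteq> sets N" "disjoint_family ?B"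
    using A \<open>disjoint_family A\<close> by (auto simp: disjoint_family_on_def)
  then have "(\<lambda>i. M (?B i) m n) sums M (\<Union>i. ?B i) m n" by (rule povm_sums[OF M])
  moreover have "(\<lambda>i. M (?B i) m n) sums (\<Sum>i<k. M (?B i) m n)"
    by (rule sums_finite) (auto simp: povm_empty[OF M])
  moreover have "(\<Union>i. ?B i) = (\<Union>i<k. A i)" by (auto split: if_splits)
  ultimately show ?thesis using sums_unique2 by fastforce
qed

lemma povm_Un:
  assumes M: "povm N M" and "A \<in> sets N" "B \<in> sets N" "A \<inter> B = {}"
  shows "M (A \<union> B) m n = M A m n + M B m n"
proof -
  let ?C = "\<lambda>i::nat. if i = 0 then A else if i = 1 then B else {}"
  have "M (\<Union>i<2. ?C i) m n = (\<Sum>i<2. M (?C i) m n)"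
    by (rule povm_finite_additive[OF M]) (use assms in \<open>auto simp: disjoint_family_on_def\<close>)
  moreover have "(\<Union>i<2. ?C i) = A \<union> B" by (auto simp: lessThan_Suc numeral_2_eq_2)
  ultimately show ?thesis by (simp add: numeral_2_eq_2)
qed

lemma quad_form_sums:
  "povm N M \<Longrightarrow> range A \<subseteq> sets N \<Longrightarrow> disjoint_family A \<Longrightarrow>
    (\<lambda>i. quad_form (M (A i)) \<psi> K) sums quad_form (M (\<Union>i. A i)) \<psi> K"
  unfolding quad_form_def by (intro sums_sum sums_mult sums_mult2 povm_sums)

lemma quad_form_le_space:
  assumes M: "povm N M" and Z: "Z \<in> sets N"
  shows "Re (quad_form (M Z) \<psi> K) \<le> Re (quad_form (M (space N)) \<psi> K)"
proof -
  have "space N = Z \<union> (space N - Z)" using sets.sets_into_space[OF Z] by auto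
  then have "quad_form (M (space N)) \<psi> K = quad_form (M Z) \<psi> K + quad_form (M (space N - Z)) \<psi> K"
    using povm_Un[OF M Z, of "space N - Z"] Z
    by (simp add: quad_form_def distrib_left distrib_right sum.distrib)
  moreover have "0 \<le> Re (quad_form (M (space N - Z)) \<psi> K)"
    using psd_quad_form[OF povm_psd[OF M]] Z by auto
  ultimately show ?thesis by simp
qed

definition entry_bound :: "'a measure \<Rightarrow> ('a set \<Rightarrow> opmat) \<Rightarrow> nat \<Rightarrow> nat \<Rightarrow> real" where
  "entry_bound N M m n =
     (1/4) * (\<Sum>k<4. Re (quad_form (M (space N)) (polarization_vector m n (\<i>^k)) (Suc (max m n))))"

lemma povm_entry_bound:
  assumes M: "povm N M" and Z: "Z \<in> sets N"
  shows "norm (M Z m n) \<le> entry_bound N M m n"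
proof -
  have "norm (M Z m n) \<le>
      (1/4) * (\<Sum>k<4. Re (quad_form (M Z) (polarization_vector m n (\<i>^k)) (Suc (max m n))))"
    by (rule psd_entry_bound[OF povm_psd[OF M Z]])
  also have "\<dots> \<le> entry_bound N M m n"
    unfolding entry_bound_def by (intro mult_left_mono sum_mono quad_form_le_space[OF M Z]) auto
  finally show ?thesis .
qed

definition quad_form_measure ::
    "'a measure \<Rightarrow> ('a set \<Rightarrow> opmat) \<Rightarrow> (nat \<Rightarrow> complex) \<Rightarrow> nat \<Rightarrow> 'a measure" where
  "quad_form_measure N M \<psi> K =
     measure_of (space N) (sets N) (\<lambda>Z. ennreal (Re (quad_form (M Z) \<psi> K)))"

lemma emeasure_quad_form_measure:
  assumes M: "povm N M" and Z: "Z \<in> sets N"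
  shows "emeasure (quad_form_measure N M \<psi> K) Z = ennreal (Re (quad_form (M Z) \<psi> K))"
  unfolding quad_form_measure_def
proof (rule emeasure_measure_of_sigma[OF sets.sigma_algebra_axioms _ _ Z])
  show "positive (sets N) (\<lambda>Z. ennreal (Re (quad_form (M Z) \<psi> K)))"
    by (simp add: positive_def quad_form_def povm_empty[OF M])
  show "countably_additive (sets N) (\<lambda>Z. ennreal (Re (quad_form (M Z) \<psi> K)))"
    unfolding countably_additive_def
  proof safe
    fix A :: "nat \<Rightarrow> _" assume A: "range A \<subseteq> sets N" "disjoint_family A"
    have "(\<lambda>i. Re (quad_form (M (A i)) \<psi> K)) sums Re (quad_form (M (\<Union>i. A i)) \<psi> K)"
      by (rule sums_Re[OF quad_form_sums[OF M A]])
    moreover have "0 \<le> Re (quad_form (M (A i)) \<psi> K)" "0 \<le> Re (quad_form (M (\<Union>i. A i)) \<psi> K)" for i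
      using psd_quad_form[OF povm_psd[OF M]] A by auto
    ultimately show "(\<Sum>i. ennreal (Re (quad_form (M (A i)) \<psi> K))) =
        ennreal (Re (quad_form (M (\<Union>i. A i)) \<psi> K))"
      by (intro sums_unique[symmetric]) simp
  qed
qed

lemma sets_quad_form_measure: "sets (quad_form_measure N M \<psi> K) = sets N"
  by (simp add: quad_form_measure_def)

lemma space_quad_form_measure: "space (quad_form_measure N M \<psi> K) = space N"
  by (simp add: quad_form_measure_def sets.space_closed)

lemma finite_measure_quad_form_measure: "povm N M \<Longrightarrow> finite_measure (quad_form_measure N M \<psi> K)"
  by (rule finite_measureI) (simp add: space_quad_form_measure emeasure_quad_form_measure)

lemma borel_measurable_rotate_set_entry:
  assumes M: "povm PhSp M" and Z: "Z \<in> sets PhSp"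
  shows "(\<lambda>\<theta>. M (rotate_set \<theta> Z) m n) \<in> borel_measurable lborel"
proof -
  define S where "S = (\<lambda>x. rotate (- fst x) (snd x)) -` Z \<inter> space (lborel \<Otimes>\<^sub>M PhSp)"
  have S: "S \<in> sets (lborel \<Otimes>\<^sub>M PhSp)"
    unfolding S_def by (rule measurable_sets[OF measurable_rotate_inverse Z])
  have slice: "Pair \<theta> -` S = rotate_set \<theta> Z" for \<theta>
    using rotate_set_eq_vimage[OF sets.sets_into_space[OF Z]] by (auto simp: S_def space_pair_measure)
  have quad_form_meas: "(\<lambda>\<theta>. quad_form (M (rotate_set \<theta> Z)) \<psi> K) \<in> borel_measurable lborel" for \<psi> K
  proof -
    interpret finite_measure "quad_form_measure PhSp M \<psi> K"
      by (rule finite_measure_quad_form_measure[OF M])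
    have "S \<in> sets (lborel \<Otimes>\<^sub>M quad_form_measure PhSp M \<psi> K)"
      using S by (subst sets_pair_measure_cong[OF refl sets_quad_form_measure])
    then have "(\<lambda>\<theta>. emeasure (quad_form_measure PhSp M \<psi> K) (Pair \<theta> -` S)) \<in> borel_measurable lborel"
      by (rule measurable_emeasure_Pair)
    then have "(\<lambda>\<theta>. of_real (enn2real (emeasure (quad_form_measure PhSp M \<psi> K) (Pair \<theta> -` S))) :: complex)
        \<in> borel_measurable lborel"
      by measurable
    moreover have "of_real (enn2real (emeasure (quad_form_measure PhSp M \<psi> K) (Pair \<theta> -` S))) =
        quad_form (M (rotate_set \<theta> Z)) \<psi> K" for \<theta>
      using psd_quad_form[OF povm_psd[OF M sets_rotate_set[OF Z]]]
      by (simp add: slice emeasure_quad_form_measure[OF M sets_rotate_set[OF Z]])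
    ultimately show ?thesis by simp
  qed
  have "(\<lambda>\<theta>. (1/4) * (\<Sum>k<4. cnj (\<i>^k) *
      quad_form (M (rotate_set \<theta> Z)) (polarization_vector m n (\<i>^k)) (Suc (max m n))))
        \<in> borel_measurable lborel"
    using quad_form_meas by measurable
  then show ?thesis by (subst polarization_identity) simp
qed

section \<open>Averaging over the circle\<close>

definition phase_avg :: "(real \<Rightarrow> complex) \<Rightarrow> complex" where
  "phase_avg g = (1/(2*pi)) *\<^sub>R (\<integral>\<theta>. indicator {0..<2*pi} \<theta> *\<^sub>R g \<theta> \<partial>lborel)"

lemma integrable_bounded_Ico:
  fixes a b :: real and g :: "real \<Rightarrow> complex"
  assumes "g \<in> borel_measurable lborel" and "\<And>\<theta>. norm (g \<theta>) \<le> B"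
  shows "integrable lborel (\<lambda>\<theta>. indicator {a..<b} \<theta> *\<^sub>R g \<theta>)"
proof (rule integrableI_bounded_set[where A="{a..<b}" and B=B])
  show "emeasure lborel {a..<b} < \<infinity>" by (cases "a \<le> b") auto
qed (use assms in \<open>auto split: split_indicator\<close>)

lemma lborel_integral_Ico_translate:
  fixes g :: "real \<Rightarrow> complex"
  shows "(\<integral>\<theta>. indicator {a..<b} \<theta> *\<^sub>R g (\<theta> + c) \<partial>lborel) =
         (\<integral>x. indicator {a+c..<b+c} x *\<^sub>R g x \<partial>lborel)"
proof -
  have "(\<integral>x. indicator {a+c..<b+c} x *\<^sub>R g x \<partial>lborel) =
      \<bar>1\<bar> *\<^sub>R (\<integral>x. indicator {a+c..<b+c} (c + 1 * x) *\<^sub>R g (c + 1 * x) \<partial>lborel)"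
    by (rule lborel_integral_real_affine) simp
  also have "\<dots> = (\<integral>\<theta>. indicator {a..<b} \<theta> *\<^sub>R g (\<theta> + c) \<partial>lborel)"
    by (auto intro!: Bochner_Integration.integral_cong split: split_indicator simp: add.commute)
  finally show ?thesis ..
qed

lemma phase_avg_const: "phase_avg (\<lambda>_. c) = c"
  using set_integral_const[of "{0..<2*pi}" lborel c]
  by (simp add: phase_avg_def set_lebesgue_integral_def)

lemma phase_avg_cong:
  assumes "\<And>\<theta>. 0 \<le> \<theta> \<Longrightarrow> \<theta> < 2*pi \<Longrightarrow> g \<theta> = h \<theta>"
  shows "phase_avg g = phase_avg h"
proof -
  have "(\<lambda>\<theta>. indicator {0..<2*pi} \<theta> *\<^sub>R g \<theta>) = (\<lambda>\<theta>. indicator {0..<2*pi} \<theta> *\<^sub>R h \<theta>)"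
    using assms by (auto split: split_indicator)
  then show ?thesis by (simp add: phase_avg_def)
qed

lemma phase_avg_cmult: "phase_avg (\<lambda>\<theta>. c * g \<theta>) = c * phase_avg g"
proof -
  have "(\<integral>\<theta>. indicator {0..<2*pi} \<theta> *\<^sub>R (c * g \<theta>) \<partial>lborel) =
      (\<integral>\<theta>. c * (indicator {0..<2*pi} \<theta> *\<^sub>R g \<theta>) \<partial>lborel)"
    by (simp add: scaleR_conv_of_real algebra_simps)
  also have "\<dots> = c * (\<integral>\<theta>. indicator {0..<2*pi} \<theta> *\<^sub>R g \<theta> \<partial>lborel)"
    by (rule integral_mult_right_zero)
  finally show ?thesis by (simp add: phase_avg_def scaleR_conv_of_real algebra_simps)
qed

lemma phase_avg_sum:
  assumes "finite I" and g: "\<And>i. i \<in> I \<Longrightarrow> g i \<in> borel_measurable lborel"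
    and B: "\<And>i \<theta>. i \<in> I \<Longrightarrow> norm (g i \<theta>) \<le> B i"
  shows "phase_avg (\<lambda>\<theta>. \<Sum>i\<in>I. g i \<theta>) = (\<Sum>i\<in>I. phase_avg (g i))"
proof -
  have "(\<integral>\<theta>. (\<Sum>i\<in>I. indicator {0..<2*pi} \<theta> *\<^sub>R g i \<theta>) \<partial>lborel) =
      (\<Sum>i\<in>I. \<integral>\<theta>. indicator {0..<2*pi} \<theta> *\<^sub>R g i \<theta> \<partial>lborel)"
    by (rule Bochner_Integration.integral_sum) (use integrable_bounded_Ico[OF g B] in auto)
  then show ?thesis by (simp add: phase_avg_def scaleR_sum_right)
qed

lemma phase_avg_double_sum:
  fixes f :: "nat \<Rightarrow> nat \<Rightarrow> real \<Rightarrow> complex"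
  assumes f: "\<And>a b. f a b \<in> borel_measurable lborel" and B: "\<And>a b \<theta>. norm (f a b \<theta>) \<le> B a b"
  shows "phase_avg (\<lambda>\<theta>. \<Sum>a<K. \<Sum>b<K. f a b \<theta>) = (\<Sum>a<K. \<Sum>b<K. phase_avg (f a b))"
proof -
  have "phase_avg (\<lambda>\<theta>. \<Sum>a<K. \<Sum>b<K. f a b \<theta>) = (\<Sum>a<K. phase_avg (\<lambda>\<theta>. \<Sum>b<K. f a b \<theta>))"
  proof (rule phase_avg_sum)
    show "(\<lambda>\<theta>. \<Sum>b<K. f a b \<theta>) \<in> borel_measurable lborel" for a using f by measurable
    show "norm (\<Sum>b<K. f a b \<theta>) \<le> (\<Sum>b<K. B a b)" for a \<theta>
      by (rule order_trans[OF norm_sum sum_mono[OF B]])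
  qed simp
  also have "\<dots> = (\<Sum>a<K. \<Sum>b<K. phase_avg (f a b))"
    by (intro sum.cong refl phase_avg_sum) (use f B in auto)
  finally show ?thesis .
qed

lemma phase_avg_real_nonneg:
  assumes "\<And>\<theta>. 0 \<le> \<theta> \<Longrightarrow> \<theta> < 2*pi \<Longrightarrow> g \<theta> = of_real (r \<theta>) \<and> 0 \<le> r \<theta>"
  shows "Im (phase_avg g) = 0 \<and> 0 \<le> Re (phase_avg g)"
proof -
  have "phase_avg g = phase_avg (\<lambda>\<theta>. of_real (r \<theta>))" by (rule phase_avg_cong) (use assms in auto)
  also have "\<dots> = of_real ((1/(2*pi)) * (\<integral>\<theta>. indicator {0..<2*pi} \<theta> * r \<theta> \<partial>lborel))"
  proof -
    have "(\<lambda>\<theta>. indicator {0..<2*pi} \<theta> *\<^sub>R complex_of_real (r \<theta>)) =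
        (\<lambda>\<theta>. of_real (indicator {0..<2*pi} \<theta> * r \<theta>))"
      by (auto split: split_indicator)
    then have "(\<integral>\<theta>. indicator {0..<2*pi} \<theta> *\<^sub>R complex_of_real (r \<theta>) \<partial>lborel) =
        of_real (\<integral>\<theta>. indicator {0..<2*pi} \<theta> * r \<theta> \<partial>lborel)"
      by (simp only: integral_complex_of_real)
    then show ?thesis by (simp add: phase_avg_def scaleR_conv_of_real)
  qed
  finally have "phase_avg g = of_real ((1/(2*pi)) * (\<integral>\<theta>. indicator {0..<2*pi} \<theta> * r \<theta> \<partial>lborel))" .
  moreover have "0 \<le> (\<integral>\<theta>. indicator {0..<2*pi} \<theta> * r \<theta> \<partial>lborel)"
    by (rule integral_nonneg_AE) (use assms in \<open>auto split: split_indicator\<close>)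
  ultimately show ?thesis by simp
qed

lemma phase_avg_shift:
  assumes g: "g \<in> borel_measurable lborel" and B: "\<And>\<theta>. norm (g \<theta>) \<le> B"
    and periodic: "\<And>\<theta>. g (\<theta> + 2*pi) = g \<theta>" and \<phi>: "0 \<le> \<phi>" "\<phi> < 2*pi"
  shows "phase_avg (\<lambda>\<theta>. g (\<theta> + \<phi>)) = phase_avg g"
proof -
  have int: "integrable lborel (\<lambda>\<theta>. indicator {a..<b} \<theta> *\<^sub>R g (\<theta> + c))" for a b c
    by (rule integrable_bounded_Ico[where B=B]) (use g B in auto)
  have "(\<integral>\<theta>. indicator {0..<2*pi} \<theta> *\<^sub>R g (\<theta> + \<phi>) \<partial>lborel) =
      (\<integral>\<theta>. indicator {0..<2*pi-\<phi>} \<theta> *\<^sub>R g (\<theta> + \<phi>) +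
            indicator {2*pi-\<phi>..<2*pi} \<theta> *\<^sub>R g (\<theta> + (\<phi> - 2*pi)) \<partial>lborel)"
    using periodic[of "\<theta> + (\<phi> - 2*pi)" for \<theta>] \<phi>
    by (intro Bochner_Integration.integral_cong) (auto split: split_indicator simp: algebra_simps)
  also have "\<dots> = (\<integral>\<theta>. indicator {0..<2*pi-\<phi>} \<theta> *\<^sub>R g (\<theta> + \<phi>) \<partial>lborel) +
      (\<integral>\<theta>. indicator {2*pi-\<phi>..<2*pi} \<theta> *\<^sub>R g (\<theta> + (\<phi> - 2*pi)) \<partial>lborel)"
    by (rule Bochner_Integration.integral_add) (rule int)+
  also have "\<dots> = (\<integral>x. indicator {\<phi>..<2*pi} x *\<^sub>R g x \<partial>lborel) +
      (\<integral>x. indicator {0..<\<phi>} x *\<^sub>R g x \<partial>lborel)"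
    by (simp add: lborel_integral_Ico_translate)
  also have "\<dots> = (\<integral>x. indicator {\<phi>..<2*pi} x *\<^sub>R g x + indicator {0..<\<phi>} x *\<^sub>R g x \<partial>lborel)"
    by (rule Bochner_Integration.integral_add[symmetric]) (use int[of _ _ 0] in simp_all)
  also have "\<dots> = (\<integral>x. indicator {0..<2*pi} x *\<^sub>R g x \<partial>lborel)"
    by (intro Bochner_Integration.integral_cong) (use \<phi> in \<open>auto split: split_indicator\<close>)
  finally show ?thesis by (simp add: phase_avg_def)
qed

lemma phase_avg_sums:
  fixes g :: "nat \<Rightarrow> real \<Rightarrow> complex"
  assumes g: "\<And>i. g i \<in> borel_measurable lborel" and f: "f \<in> borel_measurable lborel"
    and sums: "\<And>\<theta>. (\<lambda>i. g i \<theta>) sums f \<theta>"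
    and bounded: "\<And>N \<theta>. norm (\<Sum>i<N. g i \<theta>) \<le> B"
  shows "(\<lambda>i. phase_avg (g i)) sums phase_avg f"
proof -
  have "norm (g i \<theta>) \<le> 2 * B" for i \<theta>
  proof -
    have "g i \<theta> = (\<Sum>j<Suc i. g j \<theta>) - (\<Sum>j<i. g j \<theta>)" by simp
    moreover have "norm (\<Sum>j<Suc i. g j \<theta>) \<le> B" "norm (\<Sum>j<i. g j \<theta>) \<le> B" by (rule bounded)+
    ultimately show ?thesis by (metis mult_2 add_mono order_trans norm_triangle_ineq4)
  qed
  then have partial_sums: "(\<Sum>i<N. phase_avg (g i)) = phase_avg (\<lambda>\<theta>. \<Sum>i<N. g i \<theta>)" for N
    by (intro phase_avg_sum[symmetric]) (use g in auto)
  let ?s = "\<lambda>N \<theta>. indicator {0..<2*pi} \<theta> *\<^sub>R (\<Sum>i<N. g i \<theta>)"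
  let ?f = "\<lambda>\<theta>. indicator {0..<2*pi} \<theta> *\<^sub>R f \<theta>"
  have "(\<lambda>N. integral\<^sup>L lborel (?s N)) \<longlonglongrightarrow> integral\<^sup>L lborel ?f"
  proof (rule integral_dominated_convergence)
    show "integrable lborel (\<lambda>\<theta>. norm (indicator {0..<2*pi} \<theta> *\<^sub>R complex_of_real B))"
      by (intro integrable_norm integrable_bounded_Ico[where B="norm (complex_of_real B)"]) auto
    show "AE \<theta> in lborel. (\<lambda>N. ?s N \<theta>) \<longlonglongrightarrow> ?f \<theta>"
      using sums unfolding sums_def by (auto intro!: tendsto_scaleR)
    show "AE \<theta> in lborel. norm (?s N \<theta>) \<le> norm (indicator {0..<2*pi} \<theta> *\<^sub>R complex_of_real B)" for N
      by (intro AE_I2) (auto split: split_indicator intro: order_trans[OF bounded abs_ge_self])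
  qed (use f g in measurable)
  then have "(\<lambda>N. (1/(2*pi)) *\<^sub>R integral\<^sup>L lborel (?s N)) \<longlonglongrightarrow> (1/(2*pi)) *\<^sub>R integral\<^sup>L lborel ?f"
    by (intro tendsto_scaleR tendsto_const)
  then show ?thesis unfolding sums_def partial_sums by (simp add: phase_avg_def)
qed

section \<open>The phase-averaged observable\<close>

text \<open>\<open>twirl_integrand M Z m n \<theta>\<close> is the matrix entry \<open>\<langle>m| exp(-i\<theta>N) M(R\<theta> Z) exp(i\<theta>N) |n\<rangle>\<close>.\<close>

definition twirl_integrand ::
    "((real \<times> real) set \<Rightarrow> opmat) \<Rightarrow> (real \<times> real) set \<Rightarrow> nat \<Rightarrow> nat \<Rightarrow> real \<Rightarrow> complex" where
  "twirl_integrand M Z m n \<theta> = cis (- \<theta> * (real m - real n)) * M (rotate_set \<theta> Z) m n"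

definition twirl :: "((real \<times> real) set \<Rightarrow> opmat) \<Rightarrow> (real \<times> real) set \<Rightarrow> opmat" where
  "twirl M Z = (\<lambda>m n. phase_avg (twirl_integrand M Z m n))"

lemma borel_measurable_twirl_integrand:
  "povm PhSp M \<Longrightarrow> Z \<in> sets PhSp \<Longrightarrow> twirl_integrand M Z m n \<in> borel_measurable lborel"
  unfolding twirl_integrand_def
  by (intro borel_measurable_times borel_measurable_rotate_set_entry)
     (auto intro!: borel_measurable_continuous_onI continuous_intros)

lemma twirl_integrand_bound:
  "povm PhSp M \<Longrightarrow> Z \<in> sets PhSp \<Longrightarrow> norm (twirl_integrand M Z m n \<theta>) \<le> entry_bound PhSp M m n"
  unfolding twirl_integrand_def using povm_entry_bound[OF _ sets_rotate_set] by (simp add: norm_mult)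

lemma twirl_integrand_add_2pi: "twirl_integrand M Z m n (\<theta> + 2*pi) = twirl_integrand M Z m n \<theta>"
proof -
  have "- (\<theta> + 2*pi) * (real m - real n) = - \<theta> * (real m - real n) + 2*pi * (real n - real m)"
    by (simp add: algebra_simps)
  moreover have "real n - real m \<in> \<int>" by (intro Ints_diff Ints_of_nat)
  ultimately have "cis (- (\<theta> + 2*pi) * (real m - real n)) = cis (- \<theta> * (real m - real n))"
    by (simp only: cis_mult[symmetric] cis_multiple_2pi mult_1_right)
  then show ?thesis unfolding twirl_integrand_def rotate_set_add_2pi by simp
qed

lemma quad_form_twirl:
  assumes M: "povm PhSp M" and Z: "Z \<in> sets PhSp"
  shows "quad_form (twirl M Z) \<psi> K =
    phase_avg (\<lambda>\<theta>. quad_form (M (rotate_set \<theta> Z)) (\<lambda>j. cis (\<theta> * real j) * \<psi> j) K)"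
proof -
  have phase: "(cnj (\<psi> m) * \<psi> n) * twirl_integrand M Z m n \<theta> =
      cnj (cis (\<theta> * real m) * \<psi> m) * M (rotate_set \<theta> Z) m n * (cis (\<theta> * real n) * \<psi> n)" for m n \<theta>
  proof -
    have "cis (- \<theta> * (real m - real n)) = cnj (cis (\<theta> * real m)) * cis (\<theta> * real n)"
      by (simp add: cis_cnj cis_mult algebra_simps)
    then show ?thesis unfolding twirl_integrand_def by (simp add: algebra_simps)
  qed
  have "quad_form (twirl M Z) \<psi> K =
      (\<Sum>m<K. \<Sum>n<K. phase_avg (\<lambda>\<theta>. (cnj (\<psi> m) * \<psi> n) * twirl_integrand M Z m n \<theta>))"
    unfolding quad_form_def twirl_def phase_avg_cmult by (simp add: algebra_simps)
  also have "\<dots> = phase_avg (\<lambda>\<theta>. \<Sum>m<K. \<Sum>n<K. (cnj (\<psi> m) * \<psi> n) * twirl_integrand M Z m n \<theta>)"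
  proof (rule phase_avg_double_sum[symmetric])
    show "(\<lambda>\<theta>. (cnj (\<psi> m) * \<psi> n) * twirl_integrand M Z m n \<theta>) \<in> borel_measurable lborel" for m n
      using borel_measurable_twirl_integrand[OF M Z] by measurable
    show "norm ((cnj (\<psi> m) * \<psi> n) * twirl_integrand M Z m n \<theta>) \<le>
        norm (cnj (\<psi> m) * \<psi> n) * entry_bound PhSp M m n" for m n \<theta>
      unfolding norm_mult[of "cnj (\<psi> m) * \<psi> n"]
      by (intro mult_left_mono twirl_integrand_bound[OF M Z]) auto
  qed
  finally show ?thesis unfolding quad_form_def phase .
qed

lemma psd_twirl: assumes M: "povm PhSp M" and Z: "Z \<in> sets PhSp" shows "psd (twirl M Z)"
  unfolding psd_iff_quad_form quad_form_twirl[OF M Z]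
  by (intro allI phase_avg_real_nonneg) (rule psd_quad_form[OF povm_psd[OF M sets_rotate_set[OF Z]]])

lemma twirl_space: assumes "povm PhSp M" shows "twirl M (space PhSp) = id_op"
proof -
  have "twirl_integrand M (space PhSp) m n = (\<lambda>_. id_op m n)" for m n
    using assms by (auto simp: twirl_integrand_def rotate_set_space povm_def id_op_def)
  then show ?thesis by (simp add: twirl_def phase_avg_const)
qed

lemma twirl_sums:
  assumes M: "povm PhSp M" and A: "range A \<subseteq> sets PhSp" and disj: "disjoint_family A"
  shows "(\<lambda>i. twirl M (A i) m n) sums twirl M (\<Union>i. A i) m n"
  unfolding twirl_def
proof (rule phase_avg_sums)
  have Ai: "A i \<in> sets PhSp" for i using A by auto
  have disj_rotated: "disjoint_family (\<lambda>i. rotate_set \<theta> (A i))" for \<theta>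
    using disj unfolding disjoint_family_on_def
    by (auto simp: rotate_set_eq_vimage[OF sets.sets_into_space[OF Ai]])
  have "(\<Union>i. A i) \<in> sets PhSp" using A by auto
  then show "twirl_integrand M (\<Union>i. A i) m n \<in> borel_measurable lborel"
    by (rule borel_measurable_twirl_integrand[OF M])
  show "twirl_integrand M (A i) m n \<in> borel_measurable lborel" for i
    by (rule borel_measurable_twirl_integrand[OF M Ai])
  have "rotate_set \<theta> (\<Union>i. A i) = (\<Union>i. rotate_set \<theta> (A i))" for \<theta>
    unfolding rotate_set_def by auto
  then show "(\<lambda>i. twirl_integrand M (A i) m n \<theta>) sums twirl_integrand M (\<Union>i. A i) m n \<theta>" for \<theta>
    unfolding twirl_integrand_def
    by (auto intro!: sums_mult povm_sums[OF M _ disj_rotated] sets_rotate_set[OF Ai])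
  show "norm (\<Sum>i<N. twirl_integrand M (A i) m n \<theta>) \<le> entry_bound PhSp M m n" for N \<theta>
  proof -
    have "(\<Sum>i<N. twirl_integrand M (A i) m n \<theta>) =
        cis (- \<theta> * (real m - real n)) * M (\<Union>i<N. rotate_set \<theta> (A i)) m n"
      unfolding twirl_integrand_def sum_distrib_left[symmetric]
      by (simp add: povm_finite_additive[OF M sets_rotate_set[OF Ai] disj_rotated])
    also have "norm \<dots> \<le> entry_bound PhSp M m n"
      by (simp add: norm_mult povm_entry_bound[OF M] sets_rotate_set[OF Ai] sets.finite_UN)
    finally show ?thesis .
  qed
qed

lemma povm_twirl: "povm PhSp M \<Longrightarrow> povm PhSp (twirl M)"
  unfolding povm_def[of PhSp "twirl M"] using psd_twirl twirl_space twirl_sums by blast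

lemma twirl_number_marginal:
  assumes M: "M (X \<times> {0..<2*pi}) = F X" and F: "smeared_number F" and X: "X \<in> sets Rplus"
  shows "twirl M (X \<times> {0..<2*pi}) = F X"
proof -
  obtain \<mu> :: "nat \<Rightarrow> real measure" where
    "F X = (\<lambda>a b. if a = b then complex_of_real (measure (\<mu> a) X) else 0)"
    using F X unfolding smeared_number_def by blast
  then have "twirl_integrand M (X \<times> {0..<2*pi}) m n = (\<lambda>_. F X m n)" for m n
    unfolding twirl_integrand_def rotate_set_Times shift_set_full M by auto
  then show ?thesis by (simp add: twirl_def phase_avg_const)
qed

lemma twirl_phase_marginal:
  assumes M: "\<And>\<Theta>. \<Theta> \<in> sets Phase \<Longrightarrow> M ({0..} \<times> \<Theta>) = E \<Theta>"
    and E: "covariant_phase E" and \<Theta>: "\<Theta> \<in> sets Phase"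
  shows "twirl M ({0..} \<times> \<Theta>) = E \<Theta>"
proof -
  have integrand: "twirl_integrand M ({0..} \<times> \<Theta>) m n \<theta> = E \<Theta> m n"
    if "0 \<le> \<theta>" "\<theta> < 2*pi" for m n \<theta>
  proof -
    have "M (rotate_set \<theta> ({0..} \<times> \<Theta>)) = E (shift_set \<Theta> \<theta>)"
      unfolding rotate_set_Times using M sets_shift_set[OF \<Theta>] by simp
    also have "\<dots> = phase_conj \<theta> (E \<Theta>)" using E \<Theta> that by (simp add: covariant_phase_def)
    finally have "M (rotate_set \<theta> ({0..} \<times> \<Theta>)) m n = cis (\<theta> * (real m - real n)) * E \<Theta> m n"
      by (simp add: phase_conj_def)
    moreover have "cis (- \<theta> * (real m - real n)) * cis (\<theta> * (real m - real n)) = 1"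
      by (simp add: cis_mult)
    ultimately show ?thesis
      unfolding twirl_integrand_def by (metis mult.assoc mult_1)
  qed
  have "phase_avg (twirl_integrand M ({0..} \<times> \<Theta>) m n) = phase_avg (\<lambda>_. E \<Theta> m n)" for m n
    by (rule phase_avg_cong) (rule integrand)
  then show ?thesis by (simp add: twirl_def phase_avg_const)
qed

lemma twirl_covariant:
  assumes M: "povm PhSp M" and X: "X \<in> sets Rplus" and \<Theta>: "\<Theta> \<in> sets Phase"
    and \<phi>: "0 \<le> \<phi>" "\<phi> < 2*pi"
  shows "phase_conj \<phi> (twirl M (X \<times> \<Theta>)) = twirl M (X \<times> shift_set \<Theta> \<phi>)"
proof (intro ext)
  fix m n
  have Z: "X \<times> \<Theta> \<in> sets PhSp" unfolding PhSp_def using X \<Theta> by (rule pair_measureI)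
  have "twirl_integrand M (X \<times> shift_set \<Theta> \<phi>) m n \<theta> =
      cis (\<phi> * (real m - real n)) * twirl_integrand M (X \<times> \<Theta>) m n (\<theta> + \<phi>)" for \<theta>
  proof -
    have "rotate_set \<theta> (X \<times> shift_set \<Theta> \<phi>) = rotate_set (\<theta> + \<phi>) (X \<times> \<Theta>)"
      unfolding rotate_set_Times[symmetric] rotate_set_rotate_set by (simp add: add.commute)
    moreover have "cis (- \<theta> * (real m - real n)) =
        cis (\<phi> * (real m - real n)) * cis (- (\<theta> + \<phi>) * (real m - real n))"
      by (simp add: cis_mult algebra_simps)
    ultimately show ?thesis unfolding twirl_integrand_def by simp
  qed
  then have "twirl_integrand M (X \<times> shift_set \<Theta> \<phi>) m n =
      (\<lambda>\<theta>. cis (\<phi> * (real m - real n)) * twirl_integrand M (X \<times> \<Theta>) m n (\<theta> + \<phi>))"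
    by (rule ext)
  then have "twirl M (X \<times> shift_set \<Theta> \<phi>) m n =
      cis (\<phi> * (real m - real n)) * phase_avg (\<lambda>\<theta>. twirl_integrand M (X \<times> \<Theta>) m n (\<theta> + \<phi>))"
    by (simp add: twirl_def phase_avg_cmult)
  also have "phase_avg (\<lambda>\<theta>. twirl_integrand M (X \<times> \<Theta>) m n (\<theta> + \<phi>)) =
      phase_avg (twirl_integrand M (X \<times> \<Theta>) m n)"
    by (rule phase_avg_shift[OF borel_measurable_twirl_integrand[OF M Z]
          twirl_integrand_bound[OF M Z] twirl_integrand_add_2pi \<phi>])
  finally show "phase_conj \<phi> (twirl M (X \<times> \<Theta>)) m n = twirl M (X \<times> shift_set \<Theta> \<phi>) m n"
    by (simp add: phase_conj_def twirl_def)
qed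

theorem mainTheorem5:
  fixes F E :: "real set \<Rightarrow> opmat"
  assumes "smeared_number F" and "covariant_phase E"
  shows "(\<exists>M. joint_observable M F E) \<longleftrightarrow>
         (\<exists>P. joint_observable P F E \<and> phase_shift_covariant_ps P)"
proof
  assume "\<exists>M. joint_observable M F E"
  then obtain M where M: "povm PhSp M"
    and number: "\<forall>X\<in>sets Rplus. M (X \<times> {0..<2*pi}) = F X"
    and phase: "\<forall>\<Theta>\<in>sets Phase. M ({0..} \<times> \<Theta>) = E \<Theta>"
    unfolding joint_observable_def by blast
  have "joint_observable (twirl M) F E"
    unfolding joint_observable_def
    using povm_twirl[OF M] twirl_number_marginal[OF _ assms(1)] twirl_phase_marginal[OF _ assms(2)]
      number phase by blast
  moreover have "phase_shift_covariant_ps (twirl M)"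
    unfolding phase_shift_covariant_ps_def using povm_twirl[OF M] twirl_covariant[OF M] by auto
  ultimately show "\<exists>P. joint_observable P F E \<and> phase_shift_covariant_ps P" by blast
qed blast

end
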